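(* Let $n\in\mathbb N$, $\mathfrak g=\mathfrak{sl}_3(\mathbb C)$ and $$v'_{2,n}=\sum_{t=0}^{2n}\frac1{t!}\,(f_{\epsilon_1-\epsilon_2}^t)_L(e_{\epsilon_1-\epsilon_2}^n)\,e_{\epsilon_2-\epsilon_3}^{2n-t}\,e_{\epsilon_1-\epsilon_3}^t\in U(\mathfrak g).$$ Let $R$ be the $\mathfrak g$-submodule of $U(\mathfrak g)$ generated by $v'_{2,n}$ under the adjoint action, $R_0$ its zero-weight subspace and $\mathcal P_0=\{p_r:r\in R_0\}$. Then the polynomial $$p(h)=\prod_{j=0}^{n-1}(h_1-j)\cdot\prod_{j=0}^{n-1}(h_2-j)\cdot\prod_{j=-1}^{n-2}(h_1+h_2-j)$$ (i.e. $h_1(h_1-1)\cdots(h_1-n+1)\,h_2(h_2-1)\cdots(h_2-n+1)\,(h_1+h_2+1)(h_1+h_2)\cdots(h_1+h_2-n+2)$) belongs to $\mathcal P_0$.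
   Context: $\mathfrak g=\mathfrak{sl}_3(\mathbb C)$ with Cartan subalgebra $\mathfrak h$ of traceless diagonal matrices, $\mathfrak n_+$ strictly upper triangular matrices. Root vectors $e_{\epsilon_1-\epsilon_2}=E_{12}$, $e_{\epsilon_2-\epsilon_3}=E_{23}$, $e_{\epsilon_1-\epsilon_3}=-E_{13}$, $f_{\epsilon_1-\epsilon_2}=E_{21}$, $f_{\epsilon_2-\epsilon_3}=E_{32}$, $f_{\epsilon_1-\epsilon_3}=-E_{31}$; $h_1=E_{11}-E_{22}$, $h_2=E_{22}-E_{33}$. $X_L f=[X,f]$ is the adjoint action, extended to $U(\mathfrak g)$. For $r\in R_0$, $p_r$ is the unique element of $\mathbb C[h_1,h_2]=S(\mathfrak h)$ with $r-p_r\in U(\mathfrak g)\mathfrak n_+$ (equivalently $rv_\mu=p_r(\mu)v_\mu$ for every highest weight vector $v_\mu$ of weight $\mu$). *)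

theory Defs
  imports "HOL-Analysis.Analysis" "HOL-Library.Poly_Mapping"
begin

datatype gword = GW "nat list"

instantiation gword :: monoid_add
begin
definition zero_gword :: gword where "zero_gword = GW []"
fun plus_gword :: "gword \<Rightarrow> gword \<Rightarrow> gword" where
  "plus_gword (GW a) (GW b) = GW (a @ b)"
instance
proof
  fix a b c :: gword
  show "a + b + c = a + (b + c)" by (cases a; cases b; cases c) simp
  show "0 + a = a" by (cases a) (simp add: zero_gword_def)
  show "a + 0 = a" by (cases a) (simp add: zero_gword_def)
qed
end

text \<open>Free associative unital C-algebra on the generators (noncommutative polynomials).\<close>
type_synonym falg = "gword \<Rightarrow>\<^sub>0 complex"

definition sc :: "complex \<Rightarrow> falg" where
  "sc c = Poly_Mapping.single 0 c"

definition gen :: "nat \<Rightarrow> falg" where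
  "gen i = Poly_Mapping.single (GW [i]) 1"

text \<open>Basis of sl_3: gen 0 = e_{e1-e2} = E12, gen 1 = e_{e2-e3} = E23, gen 2 = e_{e1-e3} = -E13,
  gen 3 = f_{e1-e2} = E21, gen 4 = f_{e2-e3} = E32, gen 5 = f_{e1-e3} = -E31,
  gen 6 = h1 = E11-E22, gen 7 = h2 = E22-E33.\<close>
abbreviation "e12 \<equiv> gen 0"
abbreviation "e23 \<equiv> gen 1"
abbreviation "e13 \<equiv> gen 2"
abbreviation "f12 \<equiv> gen 3"
abbreviation "f23 \<equiv> gen 4"
abbreviation "f13 \<equiv> gen 5"
abbreviation "hh1 \<equiv> gen 6"
abbreviation "hh2 \<equiv> gen 7"

definition sl3 :: "(complex^3^3) set" where
  "sl3 = {X. trace X = 0}"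

definition iota :: "complex^3^3 \<Rightarrow> falg" where
  "iota X = sc (X$1$2) * e12 + sc (X$2$3) * e23 + sc (- X$1$3) * e13
          + sc (X$2$1) * f12 + sc (X$3$2) * f23 + sc (- X$3$1) * f13
          + sc (X$1$1) * hh1 + sc (- X$3$3) * hh2"

text \<open>The two-sided ideal I with U(sl_3) = free algebra / I.\<close>
inductive_set Uideal :: "falg set" where
  rel: "X \<in> sl3 \<Longrightarrow> Y \<in> sl3 \<Longrightarrow>
          iota X * iota Y - iota Y * iota X - iota (X ** Y - Y ** X) \<in> Uideal"
| zero: "0 \<in> Uideal"
| add: "a \<in> Uideal \<Longrightarrow> b \<in> Uideal \<Longrightarrow> a + b \<in> Uideal"
| lmult: "a \<in> Uideal \<Longrightarrow> c * a \<in> Uideal"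
| rmult: "a \<in> Uideal \<Longrightarrow> a * c \<in> Uideal"

definition Ueq :: "falg \<Rightarrow> falg \<Rightarrow> bool" where
  "Ueq a b \<longleftrightarrow> a - b \<in> Uideal"

definition ad :: "falg \<Rightarrow> falg \<Rightarrow> falg" where
  "ad x f = x * f - f * x"

definition vprime :: "nat \<Rightarrow> falg" where
  "vprime n = (\<Sum>t = 0..2*n. sc (1 / of_nat (fact t)) *
      ((ad f12 ^^ t) (e12 ^ n)) * e23 ^ (2*n - t) * e13 ^ t)"

text \<open>Preimage in the free algebra of the sl_3-submodule R of U(sl_3) (adjoint action)
  generated by v'_{2,n}.\<close>
inductive_set Rmod :: "falg \<Rightarrow> falg set" for v :: falg where
  gen: "v \<in> Rmod v"
| ideal: "a \<in> Uideal \<Longrightarrow> a \<in> Rmod v"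
| add: "a \<in> Rmod v \<Longrightarrow> b \<in> Rmod v \<Longrightarrow> a + b \<in> Rmod v"
| smult: "a \<in> Rmod v \<Longrightarrow> sc c * a \<in> Rmod v"
| adj: "X \<in> sl3 \<Longrightarrow> a \<in> Rmod v \<Longrightarrow> ad (iota X) a \<in> Rmod v"

definition zero_weight :: "falg \<Rightarrow> bool" where
  "zero_weight r \<longleftrightarrow> Ueq (ad hh1 r) 0 \<and> Ueq (ad hh2 r) 0"

text \<open>Membership in the left ideal U(g) n_+ of U(g) (n_+ spanned by E12, E23, E13).\<close>
definition in_Un_plus :: "falg \<Rightarrow> bool" where
  "in_Un_plus x \<longleftrightarrow> (\<exists>a b c. Ueq x (a * e12 + b * e23 + c * e13))"

definition ppoly :: "nat \<Rightarrow> falg" where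
  "ppoly n = prod_list (map (\<lambda>j. hh1 - of_nat j) [0..<n])
           * prod_list (map (\<lambda>j. hh2 - of_nat j) [0..<n])
           * prod_list (map (\<lambda>j. hh1 + hh2 - of_int j) [-1..int n - 2])"

end

theory Submission
  imports Defs
begin

text \<open>
  Work in \<open>U = U(sl\<^sub>3)\<close> modulo the left ideal \<open>U n\<^sub>+\<close>. If \<open>X f\<^sup>a\<close> lies in
  \<open>U n\<^sub>+\<close> for all \<open>a < K\<close>, then \<open>ad(f)\<^sup>K X \<equiv> (-1)\<^sup>K X f\<^sup>K\<close>; hence
  \<open>ad(f\<^sub>1\<^sub>2)\<^sup>n ad(f\<^sub>2\<^sub>3)\<^sup>2\<^sup>n v'\<close> is congruent to \<open>(-1)\<^sup>n v' f\<^sub>2\<^sub>3\<^sup>2\<^sup>n f\<^sub>1\<^sub>2\<^sup>n\<close>.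
  Moving \<open>e\<^sub>1\<^sub>2, e\<^sub>2\<^sub>3, e\<^sub>1\<^sub>3\<close> to the right with the \<open>sl\<^sub>2\<close> relation
  \<open>e f\<^sup>m \<equiv> f\<^sup>m\<^sup>-\<^sup>1 m (h - m + 1)\<close> kills the summands of \<open>v'\<close> with \<open>t > n\<close> and turns the
  others into products of shifted factorials in \<open>h\<^sub>1, h\<^sub>2\<close>, whose sum is
  \<open>n! (2n)! p(h)\<close> by Chu-Vandermonde. The element has weight zero, so rescaling it gives \<open>r\<close>.
\<close>

definition commutator :: "'a::ring \<Rightarrow> 'a \<Rightarrow> 'a" where
  "commutator x y = x * y - y * x"

lemma commutator_mult: "commutator h (x * y) = commutator h x * y + x * commutator h y"
  by (simp add: commutator_def algebra_simps)

lemma of_nat_mult_left_commute: "(of_nat k :: 'a::ring_1) * (x * y) = x * (of_nat k * y)"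
proof -
  have "(of_nat k :: 'a) * (x * y) = (of_nat k * x) * y" by (simp only: mult.assoc)
  also have "\<dots> = (x * of_nat k) * y" by (simp only: mult_of_nat_commute)
  finally show ?thesis by (simp only: mult.assoc)
qed

lemma of_int_mult_left_commute: "(of_int k :: 'a::ring_1) * (x * y) = x * (of_int k * y)"
proof -
  have "(of_int k :: 'a) * (x * y) = (of_int k * x) * y" by (simp only: mult.assoc)
  also have "\<dots> = (x * of_int k) * y" by (simp only: mult_of_int_commute)
  finally show ?thesis by (simp only: mult.assoc)
qed

lemma commutator_mult_eigen:
  fixes h x y :: "'a::ring_1"
  assumes "commutator h x = of_int p * x" and "commutator h y = of_int q * y"
  shows "commutator h (x * y) = of_int (p + q) * (x * y)"
proof -
  have "commutator h (x * y) = of_int p * x * y + x * (of_int q * y)"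
    using assms by (simp add: commutator_mult)
  also have "\<dots> = of_int (p + q) * (x * y)"
    by (simp only: of_int_mult_left_commute[symmetric] of_int_add distrib_right mult.assoc)
  finally show ?thesis .
qed

lemma mult_power_eigen:
  fixes h F :: "'a::ring_1"
  assumes "h * F = F * h + of_int k * F"
  shows "h * F ^ m = F ^ m * (h + of_int k * of_nat m)"
proof (induction m)
  case (Suc m)
  have "h * F ^ Suc m = (h * F) * F ^ m"
    by (simp add: mult.assoc)
  also have "\<dots> = F * (h * F ^ m) + of_int k * F * F ^ m"
    using assms by (simp add: algebra_simps)
  also have "\<dots> = F * F ^ m * (h + of_int k * of_nat m) + F * F ^ m * of_int k"
    using Suc by (simp add: mult.assoc mult_of_int_commute)
  also have "\<dots> = F ^ Suc m * (h + of_int k * of_nat (Suc m))"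
    by (simp add: algebra_simps)
  finally show ?case .
qed simp

lemma sl2_raising_lowering_power:
  fixes E F h :: "'a::ring_1"
  assumes EF: "E * F = F * E + h" and hF: "h * F = F * h + - 2 * F"
  shows "E * F ^ Suc m = F ^ Suc m * E + F ^ m * (of_nat (Suc m) * (h - of_nat m))"
proof (induction m)
  case 0
  then show ?case using EF by simp
next
  case (Suc m)
  have h_F_power: "h * F ^ Suc m = F ^ Suc m * (h - 2 * of_nat (Suc m))"
    using mult_power_eigen[of h F "-2" "Suc m"] hF by (simp add: algebra_simps)
  have "E * F ^ Suc (Suc m) = (E * F) * F ^ Suc m"
    by (simp add: mult.assoc)
  also have "\<dots> = F * (E * F ^ Suc m) + h * F ^ Suc m"
    using EF by (simp add: algebra_simps)
  also have "\<dots> = F ^ Suc (Suc m) * E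
      + F ^ Suc m * (of_nat (Suc m) * (h - of_nat m) + (h - 2 * of_nat (Suc m)))"
    unfolding Suc h_F_power by (simp add: algebra_simps)
  also have "of_nat (Suc m) * (h - of_nat m) + (h - 2 * of_nat (Suc m))
      = (of_nat (Suc (Suc m)) * (h - of_nat (Suc m)) :: 'a)"
    by (simp add: algebra_simps flip: one_add_one)
  finally show ?case .
qed

text \<open>The coefficient in \<open>e f\<^sup>m = f\<^sup>m e + f\<^sup>m\<^sup>-\<^sup>1 m (h - m + 1)\<close>, see
  \<open>sl2_raising_lowering_power\<close>.\<close>

definition sl2_coeff :: "'a::comm_ring_1 \<Rightarrow> nat \<Rightarrow> 'a" where
  "sl2_coeff h m = of_nat m * (h - of_nat m + 1)"

lemma sl2_coeff_0 [simp]: "sl2_coeff h 0 = 0"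
  by (simp add: sl2_coeff_def)

lemma sl2_coeff_Suc: "sl2_coeff h (Suc m) = of_nat (Suc m) * (h - of_nat m)"
  by (simp add: sl2_coeff_def)

definition sl2_coeff_prod :: "'a::comm_ring_1 \<Rightarrow> nat \<Rightarrow> nat \<Rightarrow> 'a" where
  "sl2_coeff_prod h s m = (\<Prod>i<s. sl2_coeff h (m - i))"

lemma sl2_coeff_prod_eq_0: "m < s \<Longrightarrow> sl2_coeff_prod h s m = 0"
  unfolding sl2_coeff_prod_def by (rule prod_zero) (auto intro!: bexI[of _ m])

lemma sl2_coeff_prod_self:
  "sl2_coeff_prod h s s = of_nat (fact s) * (\<Prod>i<s. h - of_nat i :: 'a::comm_ring_1)"
  unfolding sl2_coeff_prod_def sl2_coeff_def
proof (induction s)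
  case (Suc s)
  have "(\<Prod>i<Suc s. of_nat (Suc s - i) * (h - of_nat (Suc s - i) + 1))
      = (of_nat (Suc s) * (h - of_nat (Suc s) + 1)) * (\<Prod>i<s. of_nat (s - i) * (h - of_nat (s - i) + 1))"
    by (subst prod.lessThan_Suc_shift) simp
  also have "\<dots> = (of_nat (Suc s) * (h - of_nat s)) * (of_nat (fact s) * (\<Prod>i<s. h - of_nat i))"
    using Suc by (simp add: algebra_simps)
  also have "\<dots> = of_nat (fact (Suc s)) * (\<Prod>i<Suc s. h - of_nat i)"
    by (simp add: prod.lessThan_Suc algebra_simps)
  finally show ?case .
qed simp

lemma prod_shifted_falling_eq_pochhammer:
  "(\<Prod>i<l. b + of_nat l - of_nat i) = pochhammer (b + 1 :: 'a::comm_ring_1) l"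
proof (induction l)
  case (Suc l)
  have "(\<Prod>i<Suc l. b + of_nat (Suc l) - of_nat i)
      = (b + of_nat (Suc l)) * (\<Prod>i<l. b + of_nat (Suc l) - of_nat (Suc i))"
    by (subst prod.lessThan_Suc_shift) simp
  also have "(\<Prod>i<l. b + of_nat (Suc l) - of_nat (Suc i)) = (\<Prod>i<l. b + of_nat l - of_nat i)"
    by (rule prod.cong) (simp_all add: algebra_simps)
  finally show ?case using Suc by (simp add: pochhammer_Suc algebra_simps)
qed simp

lemma sl2_coeff_prod_shifted_self:
  "sl2_coeff_prod (h + of_nat l) (l + m) (l + m)
    = of_nat (fact (l + m)) * (pochhammer (h + 1 :: 'a::comm_ring_1) l * (\<Prod>i<m. h - of_nat i))"
proof -
  have "(\<Prod>i<l + m. h + of_nat l - of_nat i) = pochhammer (h + 1) l * (\<Prod>i<m. h - of_nat i)"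
    by (induction m) (simp_all add: prod_shifted_falling_eq_pochhammer prod.lessThan_Suc algebra_simps)
  then show ?thesis by (simp add: sl2_coeff_prod_self)
qed

lemma prod_lessThan_diff_mult_fact: "t \<le> m \<Longrightarrow> (\<Prod>i<t. m - i) * fact (m - t) = (fact m :: nat)"
proof (induction t)
  case (Suc t)
  have "0 < m - t" "m - t - 1 = m - Suc t"
    using Suc.prems by auto
  then have fact_m_t: "fact (m - t) = (m - t) * fact (m - Suc t)"
    using fact_reduce[of "m - t", where 'a = nat] by simp
  have "(\<Prod>i<Suc t. m - i) * fact (m - Suc t) = (\<Prod>i<t. m - i) * ((m - t) * fact (m - Suc t))"
    by (simp only: prod.lessThan_Suc mult.assoc)
  also have "\<dots> = fact m"
    using Suc fact_m_t by simp
  finally show ?case .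
qed simp

lemma fact_prod_identity:
  assumes "t \<le> n"
  shows "fact n * fact (2*n - t) * (\<Prod>i<t. (2*n - i) * (n - i))
    = fact t * (fact n * fact (2*n) * (n choose t))"
proof -
  have double: "(\<Prod>i<t. 2*n - i) * fact (2*n - t) = fact (2*n)"
    by (rule prod_lessThan_diff_mult_fact) (use assms in linarith)
  have "(\<Prod>i<t. n - i) * fact (n - t) = (fact t * (n choose t)) * fact (n - t)"
    using prod_lessThan_diff_mult_fact[OF assms] binomial_fact_lemma[OF assms]
    by (simp only: mult.commute mult.left_commute)
  then have single: "(\<Prod>i<t. n - i) = fact t * (n choose t)"
    using fact_nonzero[of "n - t", where 'a = nat] by (rule mult_right_cancel[THEN iffD1, rotated])
  show ?thesis
    unfolding prod.distrib single using double by (simp only: mult_ac)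
qed

locale left_ideal =
  fixes N :: "'a::ring_1 set"
  assumes zero_mem: "0 \<in> N"
    and add_mem: "x \<in> N \<Longrightarrow> y \<in> N \<Longrightarrow> x + y \<in> N"
    and mult_mem: "x \<in> N \<Longrightarrow> a * x \<in> N"
begin

definition eqmod :: "'a \<Rightarrow> 'a \<Rightarrow> bool" where
  "eqmod x y \<longleftrightarrow> x - y \<in> N"

lemma diff_mem: "x \<in> N \<Longrightarrow> y \<in> N \<Longrightarrow> x - y \<in> N"
  using add_mem[of x "- y"] mult_mem[of y "- 1"] by simp

lemma eqmod_0_iff: "eqmod x 0 \<longleftrightarrow> x \<in> N"
  by (simp add: eqmod_def)

lemma eqmod_refl [simp]: "eqmod x x"
  by (simp add: eqmod_def zero_mem)

lemma eqmod_trans [trans]: "eqmod x y \<Longrightarrow> eqmod y z \<Longrightarrow> eqmod x z"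
  unfolding eqmod_def using add_mem by fastforce

lemma eqmod_add: "eqmod a b \<Longrightarrow> eqmod c d \<Longrightarrow> eqmod (a + c) (b + d)"
  unfolding eqmod_def by (drule (1) add_mem) (simp add: algebra_simps)

lemma eqmod_diff: "eqmod a b \<Longrightarrow> eqmod c d \<Longrightarrow> eqmod (a - c) (b - d)"
  unfolding eqmod_def by (drule (1) diff_mem) (simp add: algebra_simps)

lemma eqmod_mult_left: "eqmod x y \<Longrightarrow> eqmod (z * x) (z * y)"
  unfolding eqmod_def by (drule mult_mem[of _ z]) (simp add: algebra_simps)

lemma eqmod_sum: "(\<And>i. i \<in> A \<Longrightarrow> eqmod (f i) (g i)) \<Longrightarrow> eqmod (sum f A) (sum g A)"
  by (induction A rule: infinite_finite_induct) (auto intro: eqmod_add)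

text \<open>Since \<open>N\<close> absorbs left factors, \<open>commutator F Y * F ^ a \<equiv> - Y * F ^ Suc a\<close>
  modulo \<open>N\<close>: each application of \<open>commutator F\<close> moves one \<open>F\<close> to the right.\<close>

lemma commutator_power_eqmod_0:
  assumes base: "\<And>a. a < K \<Longrightarrow> eqmod (X * F ^ a * S) 0" and "m + a < K"
  shows "eqmod ((commutator F ^^ m) X * F ^ a * S) 0"
  using \<open>m + a < K\<close>
proof (induction m arbitrary: a)
  case 0
  then show ?case using base by simp
next
  case (Suc m)
  let ?Y = "(commutator F ^^ m) X"
  have "(commutator F ^^ Suc m) X * F ^ a * S = F * (?Y * F ^ a * S) - ?Y * F ^ Suc a * S"
    by (simp add: commutator_def algebra_simps)
  also have "eqmod \<dots> (F * 0 - 0)"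
    using Suc by (intro eqmod_diff eqmod_mult_left Suc.IH) auto
  finally show ?case by simp
qed

lemma commutator_power_eqmod:
  assumes base: "\<And>a. a < K \<Longrightarrow> eqmod (X * F ^ a * S) 0" and "m + a = K"
  shows "eqmod ((commutator F ^^ m) X * F ^ a * S) ((-1) ^ m * (X * F ^ K * S))"
  using \<open>m + a = K\<close>
proof (induction m arbitrary: a)
  case (Suc m)
  let ?Y = "(commutator F ^^ m) X"
  have "(commutator F ^^ Suc m) X * F ^ a * S = F * (?Y * F ^ a * S) - ?Y * F ^ Suc a * S"
    by (simp add: commutator_def algebra_simps)
  also have "eqmod \<dots> (F * 0 - (-1) ^ m * (X * F ^ K * S))"
    using Suc by (intro eqmod_diff eqmod_mult_left commutator_power_eqmod_0[OF base] Suc.IH) auto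
  finally show ?case by simp
qed simp

end

section \<open>The enveloping algebra as a quotient ring\<close>

lemma gword_add_eq_0_iff: "(a::gword) + b = 0 \<longleftrightarrow> a = 0 \<and> b = 0"
  by (cases a; cases b) (auto simp: zero_gword_def)

definition counit :: "falg \<Rightarrow> complex" where
  "counit x = Poly_Mapping.lookup x 0"

lemma counit_mult: "counit (x * y) = counit x * counit y"
proof -
  have "(\<lambda>q. Poly_Mapping.lookup y q when 0 = l + q)
      = (\<lambda>q. (Poly_Mapping.lookup y q when l = 0) when q = 0)" for l
    by (auto simp: fun_eq_iff when_def gword_add_eq_0_iff[of l] eq_commute[of 0])
  then have "(\<Sum>q. Poly_Mapping.lookup y q when 0 = l + q) = (Poly_Mapping.lookup y 0 when l = 0)" for l
    by (simp only:) (cases "l = 0"; simp)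
  then show ?thesis
    unfolding counit_def lookup_mult by (simp add: mult_when)
qed

lemma counit_add: "counit (x + y) = counit x + counit y"
  by (simp add: counit_def lookup_add)

lemma counit_diff: "counit (x - y) = counit x - counit y"
  by (simp add: counit_def lookup_minus)

lemma counit_gen: "counit (gen i) = 0"
  by (simp add: counit_def gen_def lookup_single zero_gword_def)

lemma counit_iota: "counit (iota X) = 0"
  by (simp add: iota_def counit_add counit_mult counit_gen)

lemma counit_Uideal: "a \<in> Uideal \<Longrightarrow> counit a = 0"
proof (induction rule: Uideal.induct)
  case zero
  show ?case by (simp add: counit_def)
qed (simp_all add: counit_diff counit_mult counit_iota counit_add)

lemma one_notin_Uideal: "(1::falg) \<notin> Uideal"
  using counit_Uideal[of 1] by (auto simp: counit_def)

lemma Uideal_uminus: "a \<in> Uideal \<Longrightarrow> - a \<in> Uideal"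
  using Uideal.lmult[of a "-1"] by simp

lemma Uideal_diff: "a \<in> Uideal \<Longrightarrow> b \<in> Uideal \<Longrightarrow> a - b \<in> Uideal"
  using Uideal.add[of a "- b"] Uideal_uminus[of b] by simp

lemma equivp_Ueq: "equivp Ueq"
proof (rule equivpI)
  show "reflp Ueq" by (simp add: reflp_def Ueq_def Uideal.zero)
  show "symp Ueq" unfolding symp_def Ueq_def using Uideal_uminus by fastforce
  show "transp Ueq" unfolding transp_def Ueq_def using Uideal.add by fastforce
qed

quotient_type U = falg / Ueq
  by (rule equivp_Ueq)

instantiation U :: ring_1
begin

lift_definition zero_U :: U is 0 .
lift_definition one_U :: U is 1 .

lift_definition plus_U :: "U \<Rightarrow> U \<Rightarrow> U" is "(+)"
  unfolding Ueq_def by (drule (1) Uideal.add) (simp add: algebra_simps)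

lift_definition minus_U :: "U \<Rightarrow> U \<Rightarrow> U" is "(-)"
  unfolding Ueq_def by (drule (1) Uideal_diff) (simp add: algebra_simps)

lift_definition uminus_U :: "U \<Rightarrow> U" is uminus
  unfolding Ueq_def by (drule Uideal_uminus) (simp add: algebra_simps)

lift_definition times_U :: "U \<Rightarrow> U \<Rightarrow> U" is "(*)"
proof -
  fix a b c d :: falg
  assume "Ueq a b" "Ueq c d"
  then have "(a - b) * c + b * (c - d) \<in> Uideal"
    unfolding Ueq_def by (intro Uideal.add Uideal.rmult Uideal.lmult)
  then show "Ueq (a * c) (b * d)"
    unfolding Ueq_def by (simp add: algebra_simps)
qed

instance
proof
  fix a b c :: U
  show "a + b + c = a + (b + c)" by transfer (simp add: algebra_simps Ueq_def Uideal.zero)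
  show "a + b = b + a" by transfer (simp add: algebra_simps Ueq_def Uideal.zero)
  show "0 + a = a" by transfer (simp add: Ueq_def Uideal.zero)
  show "- a + a = 0" by transfer (simp add: Ueq_def Uideal.zero)
  show "a - b = a + - b" by transfer (simp add: Ueq_def Uideal.zero)
  show "a * b * c = a * (b * c)" by transfer (simp add: algebra_simps Ueq_def Uideal.zero)
  show "(a + b) * c = a * c + b * c" by transfer (simp add: algebra_simps Ueq_def Uideal.zero)
  show "a * (b + c) = a * b + a * c" by transfer (simp add: algebra_simps Ueq_def Uideal.zero)
  show "1 * a = a" by transfer (simp add: Ueq_def Uideal.zero)
  show "a * 1 = a" by transfer (simp add: Ueq_def Uideal.zero)
  show "(0::U) \<noteq> 1" by transfer (use one_notin_Uideal Uideal_uminus in \<open>fastforce simp: Ueq_def\<close>)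
qed

end

abbreviation cls :: "falg \<Rightarrow> U" where
  "cls \<equiv> abs_U"

lemma cls_add: "cls (a + b) = cls a + cls b"
  by (simp add: plus_U.abs_eq)

lemma cls_mult: "cls (a * b) = cls a * cls b"
  by (simp add: times_U.abs_eq)

lemma cls_diff: "cls (a - b) = cls a - cls b"
  by (simp add: minus_U.abs_eq)

lemma cls_uminus: "cls (- a) = - cls a"
  by (simp add: uminus_U.abs_eq)

lemma cls_0: "cls 0 = 0"
  by (simp add: zero_U.abs_eq)

lemma cls_1: "cls 1 = 1"
  by (simp add: one_U.abs_eq)

lemmas cls_simps = cls_add cls_mult cls_diff cls_uminus cls_0 cls_1

lemma cls_eq_iff: "cls a = cls b \<longleftrightarrow> Ueq a b"
  by (simp add: U.abs_eq_iff)

lemma cls_surj: "\<exists>a. x = cls a"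
  by (metis Quotient_U Quotient_abs_rep)

lemma cls_power: "cls (a ^ k) = cls a ^ k"
  by (induction k) (simp_all add: cls_simps)

lemma cls_of_nat: "cls (of_nat k) = of_nat k"
  by (induction k) (simp_all add: cls_simps)

lemma cls_numeral: "cls (numeral k) = numeral k"
  using cls_of_nat[of "numeral k"] by simp

lemma cls_of_int: "cls (of_int k) = of_int k"
  by (cases k rule: int_cases) (simp_all add: cls_simps cls_of_nat)

lemma cls_sum: "cls (sum f A) = (\<Sum>x\<in>A. cls (f x))"
  by (induction A rule: infinite_finite_induct) (simp_all add: cls_simps)

lemma cls_prod_list: "cls (prod_list (map f xs)) = prod_list (map (\<lambda>x. cls (f x)) xs)"
  by (induction xs) (simp_all add: cls_simps)

lemma cls_ad: "cls (ad x y) = cls x * cls y - cls y * cls x"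
  by (simp add: ad_def cls_simps)

lemma sc_0: "sc 0 = 0"
  by (simp add: sc_def)

lemma sc_1: "sc 1 = 1"
  by (simp add: sc_def)

lemma sc_uminus: "sc (- a) = - sc a"
  by (simp add: sc_def single_uminus)

lemma sc_numeral: "sc (numeral k) = numeral k"
  by (simp add: sc_def)

lemma sc_mult: "sc (a * b) = sc a * sc b"
  by (simp add: sc_def mult_single)

lemma sc_of_nat: "sc (of_nat k) = of_nat k"
  by (simp add: sc_def)

lemma sc_mult_commute: "sc c * y = y * sc c"
proof (rule poly_mapping_eqI)
  fix w
  have "(\<lambda>q. (c when 0 = q) when w = l + q) = (\<lambda>q. (c when l = w) when q = 0)" for l :: gword
    by (auto simp: fun_eq_iff when_def)
  then have right: "(\<Sum>q. (c when 0 = q) when w = l + q) = (c when l = w)" for l :: gword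
    by (simp only:) simp
  have "(\<lambda>l. (c when 0 = l) * (\<Sum>q. Poly_Mapping.lookup y q when w = l + q))
      = (\<lambda>l. c * Poly_Mapping.lookup y w when l = 0)"
    by (auto simp: fun_eq_iff when_def)
  then have left: "(\<Sum>l. (c when 0 = l) * (\<Sum>q. Poly_Mapping.lookup y q when w = l + q))
      = c * Poly_Mapping.lookup y w"
    by (simp only:) simp
  show "Poly_Mapping.lookup (sc c * y) w = Poly_Mapping.lookup (y * sc c) w"
    unfolding sc_def lookup_mult lookup_single left right by (simp add: mult_when mult.commute)
qed

definition E12 :: U where "E12 = cls e12"

definition E23 :: U where "E23 = cls e23"

definition E13 :: U where "E13 = cls e13"

definition F12 :: U where "F12 = cls f12"

definition F23 :: U where "F23 = cls f23"

definition H1 :: U where "H1 = cls hh1"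

definition H2 :: U where "H2 = cls hh2"

definition matrix_unit :: "3 \<Rightarrow> 3 \<Rightarrow> complex^3^3" where
  "matrix_unit i j = (\<chi> a b. if a = i \<and> b = j then 1 else 0)"

lemma three_neq: "(1::3) \<noteq> 2" "(1::3) \<noteq> 3" "(2::3) \<noteq> 3" "(2::3) \<noteq> 1" "(3::3) \<noteq> 1" "(3::3) \<noteq> 2"
  by (simp_all add: exhaust_3)

lemmas sl3_matrix_simps = matrix_unit_def matrix_matrix_mult_def sum_3 three_neq iota_def
  sl3_def trace_def sc_0 sc_1 sc_uminus sc_numeral cls_simps cls_numeral

lemma cls_iota_commute:
  assumes "X \<in> sl3" "Y \<in> sl3" "iota X = a" "iota Y = b" "cls (iota (X ** Y - Y ** X)) = d"
  shows "cls a * cls b = cls b * cls a + d"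
proof -
  have "Ueq (a * b - b * a) (iota (X ** Y - Y ** X))"
    using Uideal.rel[OF assms(1,2)] assms(3,4) by (simp add: Ueq_def)
  then show ?thesis
    using assms(5) by (simp add: cls_eq_iff[symmetric] cls_simps algebra_simps)
qed

lemma E12_F12: "E12 * F12 = F12 * E12 + H1"
  unfolding E12_def F12_def H1_def
  by (rule cls_iota_commute[of "matrix_unit 1 2" "matrix_unit 2 1"]) (simp_all add: sl3_matrix_simps)

lemma E23_F23: "E23 * F23 = F23 * E23 + H2"
  unfolding E23_def F23_def H2_def
  by (rule cls_iota_commute[of "matrix_unit 2 3" "matrix_unit 3 2"]) (simp_all add: sl3_matrix_simps)

lemma E23_F12: "E23 * F12 = F12 * E23"
  using cls_iota_commute[of "matrix_unit 2 3" "matrix_unit 2 1" e23 f12 0]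
  by (simp add: sl3_matrix_simps E23_def F12_def)

lemma E12_F23: "E12 * F23 = F23 * E12"
  using cls_iota_commute[of "matrix_unit 1 2" "matrix_unit 3 2" e12 f23 0]
  by (simp add: sl3_matrix_simps E12_def F23_def)

lemma E13_F12: "E13 * F12 = F12 * E13 + E23"
  unfolding E13_def F12_def E23_def
  by (rule cls_iota_commute[of "- matrix_unit 1 3" "matrix_unit 2 1"]) (simp_all add: sl3_matrix_simps)

lemma E13_F23: "E13 * F23 = F23 * E13 + - E12"
  unfolding E13_def F23_def E12_def
  by (rule cls_iota_commute[of "- matrix_unit 1 3" "matrix_unit 3 2"]) (simp_all add: sl3_matrix_simps)

lemma H1_H2: "H1 * H2 = H2 * H1"
  using cls_iota_commute[of "matrix_unit 1 1 - matrix_unit 2 2" "matrix_unit 2 2 - matrix_unit 3 3" hh1 hh2 0]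
  by (simp add: sl3_matrix_simps H1_def H2_def)

lemma H1_E12: "H1 * E12 = E12 * H1 + 2 * E12"
  unfolding H1_def E12_def
  by (rule cls_iota_commute[of "matrix_unit 1 1 - matrix_unit 2 2" "matrix_unit 1 2"])
    (simp_all add: sl3_matrix_simps)

lemma H1_E23: "H1 * E23 = E23 * H1 + - E23"
  unfolding H1_def E23_def
  by (rule cls_iota_commute[of "matrix_unit 1 1 - matrix_unit 2 2" "matrix_unit 2 3"])
    (simp_all add: sl3_matrix_simps)

lemma H1_E13: "H1 * E13 = E13 * H1 + E13"
  unfolding H1_def E13_def
  by (rule cls_iota_commute[of "matrix_unit 1 1 - matrix_unit 2 2" "- matrix_unit 1 3"])
    (simp_all add: sl3_matrix_simps)

lemma H1_F12: "H1 * F12 = F12 * H1 + - 2 * F12"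
  unfolding H1_def F12_def
  by (rule cls_iota_commute[of "matrix_unit 1 1 - matrix_unit 2 2" "matrix_unit 2 1"])
    (simp_all add: sl3_matrix_simps)

lemma H1_F23: "H1 * F23 = F23 * H1 + F23"
  unfolding H1_def F23_def
  by (rule cls_iota_commute[of "matrix_unit 1 1 - matrix_unit 2 2" "matrix_unit 3 2"])
    (simp_all add: sl3_matrix_simps)

lemma H2_E12: "H2 * E12 = E12 * H2 + - E12"
  unfolding H2_def E12_def
  by (rule cls_iota_commute[of "matrix_unit 2 2 - matrix_unit 3 3" "matrix_unit 1 2"])
    (simp_all add: sl3_matrix_simps)

lemma H2_E23: "H2 * E23 = E23 * H2 + 2 * E23"
  unfolding H2_def E23_def
  by (rule cls_iota_commute[of "matrix_unit 2 2 - matrix_unit 3 3" "matrix_unit 2 3"])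
    (simp_all add: sl3_matrix_simps)

lemma H2_E13: "H2 * E13 = E13 * H2 + E13"
  unfolding H2_def E13_def
  by (rule cls_iota_commute[of "matrix_unit 2 2 - matrix_unit 3 3" "- matrix_unit 1 3"])
    (simp_all add: sl3_matrix_simps)

lemma H2_F12: "H2 * F12 = F12 * H2 + F12"
  unfolding H2_def F12_def
  by (rule cls_iota_commute[of "matrix_unit 2 2 - matrix_unit 3 3" "matrix_unit 2 1"])
    (simp_all add: sl3_matrix_simps)

lemma H2_F23: "H2 * F23 = F23 * H2 + - 2 * F23"
  unfolding H2_def F23_def
  by (rule cls_iota_commute[of "matrix_unit 2 2 - matrix_unit 3 3" "matrix_unit 3 2"])
    (simp_all add: sl3_matrix_simps)

definition C :: "complex \<Rightarrow> U" where
  "C c = cls (sc c)"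

lemma C_commute: "C c * x = x * C c"
  using cls_surj[of x] by (auto simp: C_def cls_mult[symmetric] sc_mult_commute)

lemma C_mult: "C (a * b) = C a * C b"
  by (simp add: C_def sc_mult cls_mult)

lemma C_1: "C 1 = 1"
  by (simp add: C_def sc_1 cls_1)

lemma C_uminus: "C (- a) = - C a"
  by (simp add: C_def sc_uminus cls_uminus)

lemma C_of_nat: "C (of_nat k) = of_nat k"
  by (simp add: C_def sc_of_nat cls_of_nat)

text \<open>Only commutativity of \<open>S(\<mathfrak>h)\<close> is needed, so it is modelled as the subring of
  \<open>U\<close> generated by \<open>H1\<close>, \<open>H2\<close> and the scalars rather than as a polynomial ring.\<close>

inductive_set Sh_carrier :: "U set" where
  H1: "H1 \<in> Sh_carrier"
| H2: "H2 \<in> Sh_carrier"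
| const: "C c \<in> Sh_carrier"
| add: "x \<in> Sh_carrier \<Longrightarrow> y \<in> Sh_carrier \<Longrightarrow> x + y \<in> Sh_carrier"
| mult: "x \<in> Sh_carrier \<Longrightarrow> y \<in> Sh_carrier \<Longrightarrow> x * y \<in> Sh_carrier"

lemma Sh_carrier_commute_H:
  assumes "y \<in> Sh_carrier"
  shows "H1 * y = y * H1" and "H2 * y = y * H2"
  using assms
proof (induction rule: Sh_carrier.induct)
  case (mult x y)
  case 1 show ?case using mult by (metis mult.assoc)
  case 2 show ?case using mult by (metis mult.assoc)
qed (use H1_H2 C_commute in \<open>simp_all add: algebra_simps\<close>)

lemma Sh_carrier_commute:
  assumes "x \<in> Sh_carrier" "y \<in> Sh_carrier"
  shows "x * y = y * x"
  using assms(1)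
proof (induction rule: Sh_carrier.induct)
  case (mult x1 x2)
  then show ?case by (metis mult.assoc)
qed (use Sh_carrier_commute_H[OF assms(2)] C_commute in \<open>simp_all add: algebra_simps\<close>)

lemma Sh_carrier_1: "1 \<in> Sh_carrier"
  using Sh_carrier.const[of 1] by (simp add: C_1)

lemma Sh_carrier_uminus: "x \<in> Sh_carrier \<Longrightarrow> - x \<in> Sh_carrier"
  using Sh_carrier.mult[OF Sh_carrier.const[of "-1"], of x] by (simp add: C_uminus C_1)

lemma Sh_carrier_0: "0 \<in> Sh_carrier"
  using Sh_carrier.add[OF Sh_carrier_1 Sh_carrier_uminus[OF Sh_carrier_1]] by simp

lemma Sh_carrier_diff: "x \<in> Sh_carrier \<Longrightarrow> y \<in> Sh_carrier \<Longrightarrow> x - y \<in> Sh_carrier"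
  using Sh_carrier.add[of x "- y"] Sh_carrier_uminus by simp

typedef Sh = Sh_carrier
  morphisms to_U Abs_Sh
  using Sh_carrier.H1 by blast

setup_lifting type_definition_Sh

instantiation Sh :: comm_ring_1
begin
lift_definition zero_Sh :: Sh is 0 by (rule Sh_carrier_0)
lift_definition one_Sh :: Sh is 1 by (rule Sh_carrier_1)
lift_definition plus_Sh :: "Sh \<Rightarrow> Sh \<Rightarrow> Sh" is "(+)" by (rule Sh_carrier.add)
lift_definition times_Sh :: "Sh \<Rightarrow> Sh \<Rightarrow> Sh" is "(*)" by (rule Sh_carrier.mult)
lift_definition minus_Sh :: "Sh \<Rightarrow> Sh \<Rightarrow> Sh" is "(-)" by (rule Sh_carrier_diff)
lift_definition uminus_Sh :: "Sh \<Rightarrow> Sh" is uminus by (rule Sh_carrier_uminus)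
instance
  by standard (transfer; simp add: algebra_simps Sh_carrier_commute)+

end

lift_definition h1 :: Sh is H1 by (rule Sh_carrier.H1)
lift_definition h2 :: Sh is H2 by (rule Sh_carrier.H2)
lift_definition const_Sh :: "complex \<Rightarrow> Sh" is C by (rule Sh_carrier.const)

lemma to_U_add: "to_U (x + y) = to_U x + to_U y"
  by transfer simp

lemma to_U_mult: "to_U (x * y) = to_U x * to_U y"
  by transfer simp

lemma to_U_diff: "to_U (x - y) = to_U x - to_U y"
  by transfer simp

lemma to_U_uminus: "to_U (- x) = - to_U x"
  by transfer simp

lemma to_U_0: "to_U 0 = 0"
  by transfer simp

lemma to_U_1: "to_U 1 = 1"
  by transfer simp

lemma to_U_of_nat: "to_U (of_nat k) = of_nat k"
  by (induction k) (simp_all add: to_U_add to_U_1 to_U_0)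

lemma to_U_of_int: "to_U (of_int k) = of_int k"
  by (cases k rule: int_cases) (simp_all add: to_U_of_nat to_U_uminus to_U_add to_U_1 to_U_diff)

lemma to_U_numeral: "to_U (numeral k) = numeral k"
  using to_U_of_nat[of "numeral k"] by simp

lemma to_U_power: "to_U (x ^ k) = to_U x ^ k"
  by (induction k) (simp_all add: to_U_mult to_U_1)

lemma to_U_sum: "to_U (sum f A) = (\<Sum>x\<in>A. to_U (f x))"
  by (induction A rule: infinite_finite_induct) (simp_all add: to_U_add to_U_0)

lemma to_U_prod_list: "to_U (prod_list (map f xs)) = prod_list (map (\<lambda>x. to_U (f x)) xs)"
  by (induction xs) (simp_all add: to_U_mult to_U_1)

lemmas to_U_simps = to_U_add to_U_mult to_U_diff to_U_uminus to_U_0 to_U_1 to_U_of_nat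
  to_U_of_int to_U_numeral to_U_power to_U_sum h1.rep_eq h2.rep_eq const_Sh.rep_eq

lemma to_U_commute: "to_U a * to_U b = to_U b * to_U a"
  by (simp add: to_U_mult[symmetric] mult.commute)

lemma const_Sh_mult: "const_Sh (a * b) = const_Sh a * const_Sh b"
  by transfer (simp add: C_mult)

lemma const_Sh_of_nat: "const_Sh (of_nat k) = of_nat k"
  by (simp add: to_U_inject[symmetric] to_U_simps C_of_nat)

lemma const_Sh_power_minus_one: "const_Sh ((-1) ^ k) = (-1) ^ k"
  by (induction k) (simp_all add: to_U_inject[symmetric] to_U_simps C_mult C_uminus C_1)

lemma const_Sh_divide_of_nat: "m \<noteq> 0 \<Longrightarrow> const_Sh (c / of_nat m) * of_nat m = const_Sh c"
  by (simp flip: const_Sh_of_nat const_Sh_mult)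

section \<open>The left ideal \<open>U n\<^sub>+\<close>\<close>

definition Un_plus :: "U set" where
  "Un_plus = {x. \<exists>a b c. x = a * E12 + b * E23 + c * E13}"

interpretation Un: left_ideal Un_plus
proof
  show "0 \<in> Un_plus"
    unfolding Un_plus_def by (rule CollectI, rule exI[of _ 0], rule exI[of _ 0], rule exI[of _ 0]) simp
next
  fix x y assume "x \<in> Un_plus" "y \<in> Un_plus"
  then show "x + y \<in> Un_plus"
    unfolding Un_plus_def
  proof clarify
    fix a b c a' b' c'
    show "\<exists>p q r. a * E12 + b * E23 + c * E13 + (a' * E12 + b' * E23 + c' * E13)
        = p * E12 + q * E23 + r * E13"
      by (rule exI[of _ "a + a'"], rule exI[of _ "b + b'"], rule exI[of _ "c + c'"])
        (simp add: algebra_simps)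
  qed
next
  fix x z assume "x \<in> Un_plus"
  then show "z * x \<in> Un_plus"
    unfolding Un_plus_def
  proof clarify
    fix a b c
    show "\<exists>p q r. z * (a * E12 + b * E23 + c * E13) = p * E12 + q * E23 + r * E13"
      by (rule exI[of _ "z * a"], rule exI[of _ "z * b"], rule exI[of _ "z * c"])
        (simp add: algebra_simps)
  qed
qed

notation Un.eqmod (infix "\<simeq>" 50)

lemma E12_mem_Un_plus: "a * E12 \<in> Un_plus"
  unfolding Un_plus_def by (rule CollectI, rule exI[of _ a], rule exI[of _ 0], rule exI[of _ 0]) simp

lemma E23_mem_Un_plus: "a * E23 \<in> Un_plus"
  unfolding Un_plus_def by (rule CollectI, rule exI[of _ 0], rule exI[of _ a], rule exI[of _ 0]) simp

lemma E13_mem_Un_plus: "a * E13 \<in> Un_plus"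
  unfolding Un_plus_def by (rule CollectI, rule exI[of _ 0], rule exI[of _ 0], rule exI[of _ a]) simp

lemma Un_plus_mult_right:
  assumes "x \<in> Un_plus" "E12 * h = p1 * E12" "E23 * h = p2 * E23" "E13 * h = p3 * E13"
  shows "x * h \<in> Un_plus"
  using assms(1) unfolding Un_plus_def
proof clarify
  fix a b c
  show "\<exists>p q r. (a * E12 + b * E23 + c * E13) * h = p * E12 + q * E23 + r * E13"
    by (rule exI[of _ "a * p1"], rule exI[of _ "b * p2"], rule exI[of _ "c * p3"])
       (simp add: algebra_simps assms(2-4))
qed

text \<open>\<open>U n\<^sub>+\<close> is stable under right multiplication by \<open>S(\<mathfrak>h)\<close>, because
  \<open>n\<^sub>+\<close> is spanned by weight vectors.\<close>

lemma Un_plus_mult_to_U: "x \<in> Un_plus \<Longrightarrow> x * to_U p \<in> Un_plus"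
proof -
  have "x * y \<in> Un_plus" if "y \<in> Sh_carrier" "x \<in> Un_plus" for x y
    using that
  proof (induction y arbitrary: x rule: Sh_carrier.induct)
    case H1
    then show ?case
      by (rule Un_plus_mult_right[of _ _ "H1 - 2" "H1 + 1" "H1 - 1"])
        (use H1_E12 H1_E23 H1_E13 in \<open>simp_all add: algebra_simps\<close>)
  next
    case H2
    then show ?case
      by (rule Un_plus_mult_right[of _ _ "H2 + 1" "H2 - 2" "H2 - 1"])
        (use H2_E12 H2_E23 H2_E13 in \<open>simp_all add: algebra_simps\<close>)
  next
    case (const c)
    then show ?case by (rule Un_plus_mult_right[of _ _ "C c" "C c" "C c"]) (simp_all add: C_commute)
  next
    case (add y z)
    then show ?case by (simp add: distrib_left Un.add_mem)
  next
    case (mult y z)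
    then show ?case by (simp add: mult.assoc[symmetric])
  qed
  then show "x \<in> Un_plus \<Longrightarrow> x * to_U p \<in> Un_plus"
    using to_U by blast
qed

lemma eqmod_mult_to_U: "x \<simeq> y \<Longrightarrow> x * to_U p \<simeq> y * to_U p"
  unfolding Un.eqmod_def by (drule Un_plus_mult_to_U[of _ p]) (simp add: algebra_simps)

section \<open>Moving raising operators to the right\<close>

lemma E12_F12_power_eqmod: "E12 * F12 ^ m \<simeq> F12 ^ (m - 1) * to_U (sl2_coeff h1 m)"
proof (cases m)
  case 0
  then show ?thesis using E12_mem_Un_plus[of 1] by (simp add: Un.eqmod_0_iff to_U_0)
next
  case (Suc m')
  have "E12 * F12 ^ m = F12 ^ m * E12 + F12 ^ (m - 1) * to_U (sl2_coeff h1 m)"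
    using sl2_raising_lowering_power[OF E12_F12 H1_F12, of m']
    by (simp only: Suc diff_Suc_1 sl2_coeff_Suc to_U_mult to_U_diff to_U_of_nat h1.rep_eq)
  also have "\<dots> \<simeq> 0 + F12 ^ (m - 1) * to_U (sl2_coeff h1 m)"
    by (intro Un.eqmod_add Un.eqmod_refl) (simp add: Un.eqmod_0_iff E12_mem_Un_plus)
  finally show ?thesis by simp
qed

lemma E23_F12_power: "E23 * F12 ^ m = F12 ^ m * E23"
  by (rule power_commuting_commutes[OF E23_F12[symmetric], symmetric])

lemma E23_F12_power_mem: "E23 * F12 ^ m \<in> Un_plus"
  by (simp add: E23_F12_power E23_mem_Un_plus)

lemma sl2_coeff_h2_F12_power:
  "to_U (sl2_coeff h2 k) * F12 ^ l = F12 ^ l * to_U (sl2_coeff (h2 + of_nat l) k)"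
proof -
  have H2_F12_power: "H2 * F12 ^ l = F12 ^ l * (H2 + of_nat l)"
    using mult_power_eigen[of H2 F12 1 l] H2_F12 by simp
  have const_F12_power: "(of_nat k - 1) * F12 ^ l = F12 ^ l * (of_nat k - (1::U))"
    by (simp add: left_diff_distrib right_diff_distrib mult_of_nat_commute)
  have "to_U (sl2_coeff h2 k) * F12 ^ l = of_nat k * (H2 * F12 ^ l) - of_nat k * ((of_nat k - 1) * F12 ^ l)"
    unfolding sl2_coeff_def to_U_mult to_U_add to_U_diff to_U_of_nat to_U_1 h2.rep_eq
    by (simp add: algebra_simps)
  also have "\<dots> = F12 ^ l * (of_nat k * (H2 + of_nat l) - of_nat k * (of_nat k - 1))"
    by (simp only: H2_F12_power const_F12_power of_nat_mult_left_commute right_diff_distrib)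
  also have "\<dots> = F12 ^ l * to_U (sl2_coeff (h2 + of_nat l) k)"
    unfolding sl2_coeff_def to_U_mult to_U_add to_U_diff to_U_of_nat to_U_1 h2.rep_eq
    by (simp add: algebra_simps)
  finally show ?thesis .
qed

lemma E23_F23_power_eqmod:
  "E23 * F23 ^ k * F12 ^ l \<simeq> F23 ^ (k - 1) * F12 ^ l * to_U (sl2_coeff (h2 + of_nat l) k)"
proof (cases k)
  case 0
  then show ?thesis using E23_F12_power_mem by (simp add: Un.eqmod_0_iff to_U_0)
next
  case (Suc k')
  have "E23 * F23 ^ k = F23 ^ k * E23 + F23 ^ (k - 1) * to_U (sl2_coeff h2 k)"
    using sl2_raising_lowering_power[OF E23_F23 H2_F23, of k']
    by (simp only: Suc diff_Suc_1 sl2_coeff_Suc to_U_mult to_U_diff to_U_of_nat h2.rep_eq)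
  then have "E23 * F23 ^ k * F12 ^ l
      = F23 ^ k * (E23 * F12 ^ l) + F23 ^ (k - 1) * F12 ^ l * to_U (sl2_coeff (h2 + of_nat l) k)"
    by (simp add: distrib_right mult.assoc sl2_coeff_h2_F12_power)
  also have "\<dots> \<simeq> 0 + F23 ^ (k - 1) * F12 ^ l * to_U (sl2_coeff (h2 + of_nat l) k)"
    by (intro Un.eqmod_add Un.eqmod_refl)
      (simp add: Un.eqmod_0_iff Un.mult_mem E23_F12_power_mem)
  finally show ?thesis by simp
qed

lemma E13_F12_power_mem: "E13 * F12 ^ m \<in> Un_plus"
proof -
  have "\<exists>x. E13 * F12 ^ m = F12 ^ m * E13 + x * E23"
  proof (induction m)
    case (Suc m)
    then obtain x where x: "E13 * F12 ^ m = F12 ^ m * E13 + x * E23" by blast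
    have "E13 * F12 ^ Suc m = F12 * (E13 * F12 ^ m) + E23 * F12 ^ m"
      using E13_F12 by (simp add: algebra_simps flip: mult.assoc)
    also have "\<dots> = F12 ^ Suc m * E13 + (F12 * x + F12 ^ m) * E23"
      using x E23_F12_power by (simp add: algebra_simps)
    finally show ?case by blast
  qed (rule exI[of _ 0], simp)
  then obtain x where "E13 * F12 ^ m = F12 ^ m * E13 + x * E23" by blast
  then show ?thesis by (simp add: Un.add_mem E13_mem_Un_plus E23_mem_Un_plus)
qed

lemma E12_F23_power: "E12 * F23 ^ m = F23 ^ m * E12"
  by (rule power_commuting_commutes[OF E12_F23[symmetric], symmetric])

lemma E13_F23_power:
  "E13 * F23 ^ Suc k = F23 ^ Suc k * E13 - of_nat (Suc k) * F23 ^ k * E12"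
proof (induction k)
  case (Suc k)
  have "E13 * F23 ^ Suc (Suc k) = (E13 * F23) * F23 ^ Suc k"
    by (simp add: mult.assoc)
  also have "\<dots> = F23 * (E13 * F23 ^ Suc k) - E12 * F23 ^ Suc k"
    by (simp only: E13_F23) (simp add: algebra_simps)
  also have "\<dots> = F23 * (F23 ^ Suc k * E13 - of_nat (Suc k) * F23 ^ k * E12) - F23 ^ Suc k * E12"
    by (simp only: Suc.IH E12_F23_power)
  also have "\<dots> = F23 * F23 ^ Suc k * E13 - (of_nat (Suc k) * (F23 * F23 ^ k) * E12 + F23 * F23 ^ k * E12)"
    by (simp add: algebra_simps of_nat_mult_left_commute)
  also have "\<dots> = F23 ^ Suc (Suc k) * E13 - of_nat (Suc (Suc k)) * F23 ^ Suc k * E12"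
    by (simp add: algebra_simps mult_of_nat_commute)
  finally show ?case .
qed (use E13_F23 in simp)

lemma E13_F23_power_eqmod:
  "E13 * F23 ^ k * F12 ^ j \<simeq> F23 ^ (k - 1) * F12 ^ (j - 1) * to_U (- (of_nat k * sl2_coeff h1 j))"
proof (cases k)
  case 0
  then show ?thesis using E13_F12_power_mem by (simp add: Un.eqmod_0_iff to_U_simps)
next
  case (Suc k')
  have "E13 * F23 ^ k * F12 ^ j = F23 ^ k * (E13 * F12 ^ j) - of_nat k * F23 ^ k' * (E12 * F12 ^ j)"
    unfolding Suc E13_F23_power by (simp only: left_diff_distrib mult.assoc)
  also have "\<dots> \<simeq> 0 - of_nat k * F23 ^ k' * (F12 ^ (j - 1) * to_U (sl2_coeff h1 j))"
    by (intro Un.eqmod_diff Un.eqmod_mult_left E12_F12_power_eqmod)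
      (simp add: Un.eqmod_0_iff Un.mult_mem E13_F12_power_mem)
  also have "\<dots> = F23 ^ k' * (F12 ^ (j - 1) * - (of_nat k * to_U (sl2_coeff h1 j)))"
    by (simp only: mult.assoc of_nat_mult_left_commute diff_0 minus_mult_right)
  also have "\<dots> = F23 ^ (k - 1) * F12 ^ (j - 1) * to_U (- (of_nat k * sl2_coeff h1 j))"
    by (simp only: Suc diff_Suc_1 mult.assoc to_U_uminus to_U_mult to_U_of_nat)
  finally show ?thesis .
qed

lemma power_eqmod_iterate:
  assumes step: "\<And>k j. E * M k j \<simeq> M (k - 1) (j - 1) * to_U (c k j)"
  shows "E ^ s * M k j \<simeq> M (k - s) (j - s) * to_U (\<Prod>i<s. c (k - i) (j - i))"
proof (induction s arbitrary: k j)
  case 0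
  then show ?case by (simp add: to_U_1)
next
  case (Suc s)
  have "E ^ Suc s * M k j = E ^ s * (E * M k j)"
    by (simp only: power_Suc2 mult.assoc)
  also have "\<dots> \<simeq> E ^ s * (M (k - 1) (j - 1) * to_U (c k j))"
    by (rule Un.eqmod_mult_left[OF step])
  also have "\<dots> = E ^ s * M (k - 1) (j - 1) * to_U (c k j)"
    by (simp add: mult.assoc)
  also have "\<dots> \<simeq> M (k - 1 - s) (j - 1 - s) * to_U (\<Prod>i<s. c (k - 1 - i) (j - 1 - i)) * to_U (c k j)"
    by (rule eqmod_mult_to_U[OF Suc.IH])
  also have "\<dots> = M (k - Suc s) (j - Suc s) * to_U (\<Prod>i<Suc s. c (k - i) (j - i))"
    by (simp del: prod.lessThan_Suc add: prod.lessThan_Suc_shift to_U_mult mult.assoc to_U_commute)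
  finally show ?case .
qed

definition e13_coeff :: "nat \<Rightarrow> nat \<Rightarrow> nat \<Rightarrow> Sh" where
  "e13_coeff t k j = (\<Prod>i<t. - (of_nat (k - i) * sl2_coeff h1 (j - i)))"

lemma E12_power_F12_power_eqmod:
  "E12 ^ s * F12 ^ m \<simeq> F12 ^ (m - s) * to_U (sl2_coeff_prod h1 s m)"
  unfolding sl2_coeff_prod_def
  by (rule power_eqmod_iterate[where M = "\<lambda>k j. F12 ^ k" and c = "\<lambda>k j. sl2_coeff h1 k" and j = 0])
    (rule E12_F12_power_eqmod)

lemma E23_power_F23_power_eqmod:
  "E23 ^ s * F23 ^ k * F12 ^ l \<simeq> F23 ^ (k - s) * F12 ^ l * to_U (sl2_coeff_prod (h2 + of_nat l) s k)"
proof -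
  have "E23 ^ s * (F23 ^ k * F12 ^ l)
      \<simeq> F23 ^ (k - s) * F12 ^ l * to_U (\<Prod>i<s. sl2_coeff (h2 + of_nat l) (k - i))"
    by (rule power_eqmod_iterate[where M = "\<lambda>k j. F23 ^ k * F12 ^ l"
          and c = "\<lambda>k j. sl2_coeff (h2 + of_nat l) k" and j = 0])
      (use E23_F23_power_eqmod in \<open>simp add: mult.assoc\<close>)
  then show ?thesis by (simp add: mult.assoc sl2_coeff_prod_def)
qed

lemma E13_power_F23_power_eqmod:
  "E13 ^ t * F23 ^ k * F12 ^ j \<simeq> F23 ^ (k - t) * F12 ^ (j - t) * to_U (e13_coeff t k j)"
proof -
  have "E13 ^ t * (F23 ^ k * F12 ^ j)
      \<simeq> F23 ^ (k - t) * F12 ^ (j - t) * to_U (\<Prod>i<t. - (of_nat (k - i) * sl2_coeff h1 (j - i)))"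
    by (rule power_eqmod_iterate[where M = "\<lambda>k j. F23 ^ k * F12 ^ j"
          and c = "\<lambda>k j. - (of_nat k * sl2_coeff h1 j)"])
      (use E13_F23_power_eqmod in \<open>simp add: mult.assoc\<close>)
  then show ?thesis by (simp add: mult.assoc e13_coeff_def)
qed

lemma e13_coeff_eq_0:
  assumes "k < t \<or> j < t"
  shows "e13_coeff t k j = 0"
proof -
  have "\<exists>i\<in>{..<t}. - (of_nat (k - i) * sl2_coeff h1 (j - i)) = 0"
    using assms by (auto intro: bexI[of _ k] bexI[of _ j])
  then show ?thesis unfolding e13_coeff_def by (rule prod_zero[rotated]) simp
qed

context
  fixes n :: nat
begin

definition ad_F12_E12 :: "nat \<Rightarrow> U" where
  "ad_F12_E12 t = (commutator F12 ^^ t) (E12 ^ n)"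

lemma E12_power_F12_power_eqmod_0: "a < n \<Longrightarrow> E12 ^ n * F12 ^ a \<simeq> 0"
  using E12_power_F12_power_eqmod[of n a] by (simp add: sl2_coeff_prod_eq_0 to_U_0)

lemma ad_F12_E12_eqmod_0:
  assumes "t + a < n"
  shows "ad_F12_E12 t * F12 ^ a \<simeq> 0"
proof -
  have "ad_F12_E12 t * F12 ^ a * 1 \<simeq> 0"
    unfolding ad_F12_E12_def
    by (rule Un.commutator_power_eqmod_0[where K = n])
      (simp_all add: E12_power_F12_power_eqmod_0 assms)
  then show ?thesis by simp
qed

lemma ad_F12_E12_eqmod:
  assumes "t \<le> n"
  shows "ad_F12_E12 t * F12 ^ (n - t) \<simeq> (-1) ^ t * to_U (sl2_coeff_prod h1 n n)"
proof -
  have "ad_F12_E12 t * F12 ^ (n - t) * 1 \<simeq> (-1) ^ t * (E12 ^ n * F12 ^ n * 1)"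
    unfolding ad_F12_E12_def
    by (rule Un.commutator_power_eqmod[where K = n])
      (simp_all add: E12_power_F12_power_eqmod_0 assms)
  also have "\<dots> \<simeq> (-1) ^ t * (F12 ^ (n - n) * to_U (sl2_coeff_prod h1 n n))"
    using Un.eqmod_mult_left[OF E12_power_F12_power_eqmod[of n n]] by simp
  finally show ?thesis by simp
qed

definition v_U :: U where
  "v_U = (\<Sum>t = 0..2*n. C (1 / of_nat (fact t)) * ad_F12_E12 t * E23 ^ (2*n - t) * E13 ^ t)"

definition v_coeff :: "nat \<Rightarrow> nat \<Rightarrow> nat \<Rightarrow> Sh" where
  "v_coeff t k j = sl2_coeff_prod (h2 + of_nat (j - t)) (2*n - t) (k - t) * e13_coeff t k j"

lemma v_U_term_eqmod:
  "C c * ad_F12_E12 t * E23 ^ (2*n - t) * E13 ^ t * F23 ^ k * F12 ^ j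
    \<simeq> C c * ad_F12_E12 t * (F23 ^ (k - t - (2*n - t)) * F12 ^ (j - t)) * to_U (v_coeff t k j)"
proof -
  let ?X = "C c * ad_F12_E12 t * E23 ^ (2*n - t)"
  have "C c * ad_F12_E12 t * E23 ^ (2*n - t) * E13 ^ t * F23 ^ k * F12 ^ j
      = ?X * (E13 ^ t * F23 ^ k * F12 ^ j)"
    by (simp add: mult.assoc)
  also have "\<dots> \<simeq> ?X * (F23 ^ (k - t) * F12 ^ (j - t) * to_U (e13_coeff t k j))"
    by (rule Un.eqmod_mult_left[OF E13_power_F23_power_eqmod])
  also have "\<dots> = C c * ad_F12_E12 t * (E23 ^ (2*n - t) * F23 ^ (k - t) * F12 ^ (j - t) * to_U (e13_coeff t k j))"
    by (simp add: mult.assoc)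
  also have "\<dots> \<simeq> C c * ad_F12_E12 t * (F23 ^ (k - t - (2*n - t)) * F12 ^ (j - t)
      * to_U (sl2_coeff_prod (h2 + of_nat (j - t)) (2*n - t) (k - t)) * to_U (e13_coeff t k j))"
    by (rule Un.eqmod_mult_left[OF eqmod_mult_to_U[OF E23_power_F23_power_eqmod]])
  also have "\<dots> = C c * ad_F12_E12 t * (F23 ^ (k - t - (2*n - t)) * F12 ^ (j - t)) * to_U (v_coeff t k j)"
    by (simp add: v_coeff_def to_U_mult mult.assoc)
  finally show ?thesis .
qed

lemma v_coeff_eq_0:
  assumes "t \<le> 2*n" and "k < 2*n \<or> j < t"
  shows "v_coeff t k j = 0"
proof (cases "t \<le> k \<and> t \<le> j")
  case True
  then have "sl2_coeff_prod (h2 + of_nat (j - t)) (2*n - t) (k - t) = 0"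
    using assms by (intro sl2_coeff_prod_eq_0) auto
  then show ?thesis by (simp add: v_coeff_def)
next
  case False
  then have "e13_coeff t k j = 0" by (intro e13_coeff_eq_0) auto
  then show ?thesis by (simp add: v_coeff_def)
qed

lemma v_U_times_eq_sum:
  "v_U * F23 ^ k * F12 ^ j
    = (\<Sum>t = 0..2*n. C (1 / of_nat (fact t)) * ad_F12_E12 t * E23 ^ (2*n - t) * E13 ^ t * F23 ^ k * F12 ^ j)"
  by (simp add: v_U_def sum_distrib_right)

lemma v_U_eqmod_0:
  assumes k: "k \<le> 2*n" and kj: "k < 2*n \<or> j < n"
  shows "v_U * F23 ^ k * F12 ^ j \<simeq> 0"
proof -
  have "v_U * F23 ^ k * F12 ^ j \<simeq> (\<Sum>t = 0..2*n. 0)"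
    unfolding v_U_times_eq_sum
  proof (rule Un.eqmod_sum)
    fix t assume "t \<in> {0..2*n}"
    then have t: "t \<le> 2*n" by simp
    let ?c = "C (1 / of_nat (fact t))"
    have reduced: "?c * ad_F12_E12 t * E23 ^ (2*n - t) * E13 ^ t * F23 ^ k * F12 ^ j
        \<simeq> ?c * ad_F12_E12 t * (F23 ^ (k - t - (2*n - t)) * F12 ^ (j - t)) * to_U (v_coeff t k j)"
      by (rule v_U_term_eqmod)
    show "?c * ad_F12_E12 t * E23 ^ (2*n - t) * E13 ^ t * F23 ^ k * F12 ^ j \<simeq> 0"
    proof (cases "k < 2*n \<or> j < t")
      case True
      then show ?thesis using reduced v_coeff_eq_0[OF t True] by (simp add: to_U_0)
    next
      case False
      then have k2n: "k = 2*n" and tj: "t + (j - t) < n" using k kj by auto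
      note reduced
      also have "?c * ad_F12_E12 t * (F23 ^ (k - t - (2*n - t)) * F12 ^ (j - t)) * to_U (v_coeff t k j)
          = ?c * (ad_F12_E12 t * F12 ^ (j - t)) * to_U (v_coeff t k j)"
        using k2n by (simp add: mult.assoc)
      also have "\<dots> \<simeq> ?c * 0 * to_U (v_coeff t k j)"
        by (intro eqmod_mult_to_U Un.eqmod_mult_left ad_F12_E12_eqmod_0 tj)
      finally show ?thesis by simp
    qed
  qed
  then show ?thesis by simp
qed

definition proj_sum :: Sh where
  "proj_sum = (\<Sum>t = 0..2*n. const_Sh (1 / of_nat (fact t)) * (-1) ^ t * sl2_coeff_prod h1 n n * v_coeff t (2*n) n)"

lemma v_U_eqmod: "v_U * F23 ^ (2*n) * F12 ^ n \<simeq> to_U proj_sum"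
proof -
  have "v_U * F23 ^ (2*n) * F12 ^ n \<simeq> (\<Sum>t = 0..2*n. to_U (const_Sh (1 / of_nat (fact t)) * (-1) ^ t
      * sl2_coeff_prod h1 n n * v_coeff t (2*n) n))"
    unfolding v_U_times_eq_sum
  proof (rule Un.eqmod_sum)
    fix t assume t: "t \<in> {0..2*n}"
    let ?c = "C (1 / of_nat (fact t))"
    have reduced: "?c * ad_F12_E12 t * E23 ^ (2*n - t) * E13 ^ t * F23 ^ (2*n) * F12 ^ n
        \<simeq> ?c * (ad_F12_E12 t * F12 ^ (n - t)) * to_U (v_coeff t (2*n) n)"
      using v_U_term_eqmod[of "1 / of_nat (fact t)" t "2*n" n] by (simp add: mult.assoc)
    show "?c * ad_F12_E12 t * E23 ^ (2*n - t) * E13 ^ t * F23 ^ (2*n) * F12 ^ n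
        \<simeq> to_U (const_Sh (1 / of_nat (fact t)) * (-1) ^ t * sl2_coeff_prod h1 n n * v_coeff t (2*n) n)"
    proof (cases "t \<le> n")
      case True
      note reduced
      also have "?c * (ad_F12_E12 t * F12 ^ (n - t)) * to_U (v_coeff t (2*n) n)
          \<simeq> ?c * ((-1) ^ t * to_U (sl2_coeff_prod h1 n n)) * to_U (v_coeff t (2*n) n)"
        by (intro eqmod_mult_to_U Un.eqmod_mult_left ad_F12_E12_eqmod True)
      also have "\<dots> = to_U (const_Sh (1 / of_nat (fact t)) * (-1) ^ t * sl2_coeff_prod h1 n n * v_coeff t (2*n) n)"
        by (simp add: to_U_simps mult.assoc)
      finally show ?thesis .
    next
      case False
      then show ?thesis using reduced t v_coeff_eq_0[of t "2*n" n] by (simp add: to_U_simps)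
    qed
  qed
  then show ?thesis by (simp add: proj_sum_def to_U_sum)
qed

definition W_U :: U where
  "W_U = (commutator F23 ^^ (2*n)) v_U"

lemma W_U_eqmod: "W_U * F12 ^ j \<simeq> v_U * F23 ^ (2*n) * F12 ^ j"
proof -
  have "(commutator F23 ^^ (2*n)) v_U * F23 ^ 0 * F12 ^ j \<simeq> (-1) ^ (2*n) * (v_U * F23 ^ (2*n) * F12 ^ j)"
    by (rule Un.commutator_power_eqmod[OF v_U_eqmod_0]) auto
  then show ?thesis by (simp add: W_U_def)
qed

definition R_U :: U where
  "R_U = (commutator F12 ^^ n) W_U"

lemma R_U_eqmod: "R_U \<simeq> (-1) ^ n * to_U proj_sum"
proof -
  have base: "W_U * F12 ^ a * 1 \<simeq> 0" if "a < n" for a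
    using Un.eqmod_trans[OF W_U_eqmod v_U_eqmod_0[of "2*n" a]] that by simp
  have "(commutator F12 ^^ n) W_U * F12 ^ 0 * 1 \<simeq> (-1) ^ n * (W_U * F12 ^ n * 1)"
    by (rule Un.commutator_power_eqmod[OF base]) auto
  also have "\<dots> \<simeq> (-1) ^ n * to_U proj_sum"
    using Un.eqmod_mult_left[OF Un.eqmod_trans[OF W_U_eqmod v_U_eqmod]] by simp
  finally show ?thesis by (simp add: R_U_def)
qed

end

context
  fixes n :: nat
begin

definition p_Sh :: Sh where
  "p_Sh = (\<Prod>i<n. h1 - of_nat i) * (\<Prod>i<n. h2 - of_nat i) * pochhammer (h1 + h2 - of_nat n + 2) n"

lemma e13_coeff_diagonal:
  assumes "t \<le> n"
  shows "e13_coeff t (2*n) n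
    = (-1) ^ t * of_nat (\<Prod>i<t. (2*n - i) * (n - i)) * pochhammer (h1 - of_nat n + 1) t"
proof -
  have "e13_coeff t (2*n) n = (\<Prod>i<t. - (of_nat ((2*n - i) * (n - i)) * (h1 - of_nat n + 1 + of_nat i)))"
    unfolding e13_coeff_def sl2_coeff_def
  proof (rule prod.cong)
    fix i assume "i \<in> {..<t}"
    then have "(of_nat (n - i) :: Sh) = of_nat n - of_nat i"
      using assms by (simp add: of_nat_diff)
    then show "- (of_nat (2 * n - i) * (of_nat (n - i) * (h1 - of_nat (n - i) + 1)))
        = - (of_nat ((2*n - i) * (n - i)) * (h1 - of_nat n + 1 + of_nat i))"
      by (simp only: of_nat_mult) (simp add: algebra_simps)
  qed simp
  then show ?thesis
    by (simp add: prod_uminus prod.distrib pochhammer_prod lessThan_atLeast0 mult.assoc)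
qed

lemma proj_sum_term:
  assumes "t \<le> n"
  shows "const_Sh (1 / of_nat (fact t)) * (-1) ^ t * sl2_coeff_prod h1 n n * v_coeff n t (2*n) n
    = of_nat (fact n * fact (2*n)) * (\<Prod>i<n. h1 - of_nat i) * (\<Prod>i<n. h2 - of_nat i)
      * (of_nat (n choose t) * pochhammer (h1 - of_nat n + 1) t * pochhammer (h2 + 1) (n - t))"
proof -
  have split: "2*n - t = (n - t) + n"
    using assms by simp
  have v_coeff: "v_coeff n t (2*n) n
      = of_nat (fact (2*n - t)) * (pochhammer (h2 + 1) (n - t) * (\<Prod>i<n. h2 - of_nat i))
        * ((-1) ^ t * of_nat (\<Prod>i<t. (2*n - i) * (n - i)) * pochhammer (h1 - of_nat n + 1) t)"
    by (simp only: v_coeff_def e13_coeff_diagonal[OF assms] split sl2_coeff_prod_shifted_self)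
  have inverse_fact: "const_Sh (1 / of_nat (fact t)) * of_nat (fact t) = 1"
    using const_Sh_divide_of_nat[of "fact t" 1] const_Sh_of_nat[of 1] by simp
  have sign: "((-1) ^ t * (-1) ^ t :: Sh) = 1"
    by (simp flip: power_mult_distrib)
  have numbers: "(of_nat (fact n) :: Sh) * of_nat (fact (2*n - t)) * of_nat (\<Prod>i<t. (2*n - i) * (n - i))
      = of_nat (fact t) * of_nat (fact n * fact (2*n) * (n choose t))"
    using arg_cong[OF fact_prod_identity[OF assms], of "of_nat :: nat \<Rightarrow> Sh"] by (simp only: of_nat_mult)
  let ?c = "const_Sh (1 / of_nat (fact t))"
  let ?P = "(\<Prod>i<n. h1 - of_nat i) * (\<Prod>i<n. h2 - of_nat i)
    * pochhammer (h1 - of_nat n + 1) t * pochhammer (h2 + 1) (n - t)"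
  have "?c * (-1) ^ t * sl2_coeff_prod h1 n n * v_coeff n t (2*n) n
      = (?c * ((-1) ^ t * (-1) ^ t) * (of_nat (fact n) * of_nat (fact (2*n - t))
        * of_nat (\<Prod>i<t. (2*n - i) * (n - i)))) * ?P"
    unfolding v_coeff sl2_coeff_prod_self by (simp only: mult_ac)
  also have "\<dots> = (?c * of_nat (fact t)) * of_nat (fact n * fact (2*n) * (n choose t)) * ?P"
    unfolding sign numbers by (simp only: mult_1_right mult.assoc)
  also have "\<dots> = of_nat (fact n * fact (2*n)) * (\<Prod>i<n. h1 - of_nat i) * (\<Prod>i<n. h2 - of_nat i)
      * (of_nat (n choose t) * pochhammer (h1 - of_nat n + 1) t * pochhammer (h2 + 1) (n - t))"
    unfolding inverse_fact mult_1_left by (simp only: of_nat_mult mult_ac)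
  finally show ?thesis .
qed

lemma proj_sum_eq: "proj_sum n = of_nat (fact n * fact (2*n)) * p_Sh"
proof -
  let ?K = "of_nat (fact n * fact (2*n)) * (\<Prod>i<n. h1 - of_nat i) * (\<Prod>i<n. h2 - of_nat i)"
  let ?f = "\<lambda>t. of_nat (n choose t) * pochhammer (h1 - of_nat n + 1) t * pochhammer (h2 + 1) (n - t)"
  have "proj_sum n
      = (\<Sum>t = 0..n. const_Sh (1 / of_nat (fact t)) * (-1) ^ t * sl2_coeff_prod h1 n n * v_coeff n t (2*n) n)"
    unfolding proj_sum_def
    by (rule sum.mono_neutral_right) (auto simp: v_coeff_eq_0)
  also have "\<dots> = (\<Sum>t = 0..n. ?K * ?f t)"
    by (rule sum.cong[OF refl], rule proj_sum_term) simp
  also have "\<dots> = ?K * (\<Sum>t\<le>n. ?f t)"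
    unfolding atLeast0AtMost by (rule sum_distrib_left[symmetric])
  also have "(\<Sum>t\<le>n. ?f t) = pochhammer (h1 + h2 - of_nat n + 2) n"
    using pochhammer_binomial_sum[of "h1 - of_nat n + 1" "h2 + 1" n] by (simp add: algebra_simps)
  finally show ?thesis
    by (simp add: p_Sh_def mult.assoc)
qed

end

section \<open>Weights\<close>

definition has_weight :: "int \<Rightarrow> int \<Rightarrow> U \<Rightarrow> bool" where
  "has_weight p q x \<longleftrightarrow> commutator H1 x = of_int p * x \<and> commutator H2 x = of_int q * x"

lemma has_weight_mult:
  "has_weight p q x \<Longrightarrow> has_weight p' q' y \<Longrightarrow> has_weight (p + p') (q + q') (x * y)"
  unfolding has_weight_def by (blast intro: commutator_mult_eigen)

lemma has_weight_diff: "has_weight p q x \<Longrightarrow> has_weight p q y \<Longrightarrow> has_weight p q (x - y)"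
  unfolding has_weight_def by (simp add: commutator_def algebra_simps)

lemma has_weight_sum: "(\<And>i. i \<in> A \<Longrightarrow> has_weight p q (f i)) \<Longrightarrow> has_weight p q (sum f A)"
  unfolding has_weight_def
  by (induction A rule: infinite_finite_induct) (simp_all add: commutator_def algebra_simps)

lemma has_weight_power: "has_weight p q x \<Longrightarrow> has_weight (int m * p) (int m * q) (x ^ m)"
proof (induction m)
  case 0
  then show ?case by (simp add: has_weight_def commutator_def)
next
  case (Suc m)
  then have "has_weight (p + int m * p) (q + int m * q) (x * x ^ m)"
    by (intro has_weight_mult)
  then show ?case by (simp add: algebra_simps)
qed

lemma has_weight_commutator:
  assumes "has_weight p q F" and "has_weight p' q' x"
  shows "has_weight (p + p') (q + q') (commutator F x)"
proof -
  have "has_weight (p + p') (q + q') (F * x)"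
    using assms by (rule has_weight_mult)
  moreover have "has_weight (p + p') (q + q') (x * F)"
    using has_weight_mult[OF assms(2,1)] by (simp add: add.commute)
  ultimately show ?thesis
    unfolding commutator_def by (rule has_weight_diff)
qed

lemma has_weight_commutator_power:
  "has_weight p q F \<Longrightarrow> has_weight p' q' x
    \<Longrightarrow> has_weight (p' + int m * p) (q' + int m * q) ((commutator F ^^ m) x)"
proof (induction m)
  case (Suc m)
  then have "has_weight (p + (p' + int m * p)) (q + (q' + int m * q)) (commutator F ((commutator F ^^ m) x))"
    by (intro has_weight_commutator)
  then show ?case by (simp add: algebra_simps)
qed simp

lemma has_weight_C: "has_weight 0 0 (C c)"
  unfolding has_weight_def commutator_def by (simp add: C_commute)

lemma has_weight_E12: "has_weight 2 (-1) E12"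
  unfolding has_weight_def commutator_def using H1_E12 H2_E12 by simp

lemma has_weight_E23: "has_weight (-1) 2 E23"
  unfolding has_weight_def commutator_def using H1_E23 H2_E23 by simp

lemma has_weight_E13: "has_weight 1 1 E13"
  unfolding has_weight_def commutator_def using H1_E13 H2_E13 by simp

lemma has_weight_F12: "has_weight (-2) 1 F12"
  unfolding has_weight_def commutator_def using H1_F12 H2_F12 by simp

lemma has_weight_F23: "has_weight 1 (-2) F23"
  unfolding has_weight_def commutator_def using H1_F23 H2_F23 by simp

lemma has_weight_v_U: "has_weight 0 (3 * int n) (v_U n)"
  unfolding v_U_def
proof (rule has_weight_sum)
  fix t assume "t \<in> {0..2*n}"
  then have t: "t \<le> 2*n" by simp
  have "has_weight (0 + (int n * 2 + int t * (-2)) + int (2*n - t) * (-1) + int t * 1)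
      (0 + (int n * (-1) + int t * 1) + int (2*n - t) * 2 + int t * 1)
      (C (1 / of_nat (fact t)) * ad_F12_E12 n t * E23 ^ (2*n - t) * E13 ^ t)"
    unfolding ad_F12_E12_def
    by (intro has_weight_mult has_weight_C has_weight_power has_weight_E23 has_weight_E13
        has_weight_commutator_power[OF has_weight_F12] has_weight_power[OF has_weight_E12])
  moreover have "0 + (int n * 2 + int t * (-2)) + int (2*n - t) * (-1) + int t * 1 = 0"
    and "0 + (int n * (-1) + int t * 1) + int (2*n - t) * 2 + int t * 1 = 3 * int n"
    using t by (simp_all add: of_nat_diff)
  ultimately show "has_weight 0 (3 * int n)
      (C (1 / of_nat (fact t)) * ad_F12_E12 n t * E23 ^ (2*n - t) * E13 ^ t)"
    by (simp only:)
qed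

lemma has_weight_R_U: "has_weight 0 0 (R_U n)"
proof -
  have "has_weight (0 + int (2*n) * 1 + int n * (-2)) (3 * int n + int (2*n) * (-2) + int n * 1) (R_U n)"
    unfolding R_U_def W_U_def
    by (intro has_weight_commutator_power has_weight_F12 has_weight_F23 has_weight_v_U)
  then show ?thesis by (simp add: algebra_simps)
qed

lemma cls_ad_power: "cls ((ad x ^^ m) y) = (commutator (cls x) ^^ m) (cls y)"
  by (induction m) (simp_all add: ad_def commutator_def cls_simps)

lemma cls_vprime: "cls (vprime n) = v_U n"
  unfolding vprime_def v_U_def ad_F12_E12_def
  by (simp add: cls_sum cls_mult cls_power cls_ad_power C_def E12_def E23_def E13_def F12_def)

lemma prod_list_map_upt: "prod_list (map f [0..<n]) = (\<Prod>i<n. (f i :: 'a::comm_monoid_mult))"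
  by (induction n) (simp_all add: prod.lessThan_Suc mult.commute)

lemma prod_list_map_upto_eq_pochhammer:
  "prod_list (map (\<lambda>j. c - of_int j) [-1..int n - 2]) = pochhammer (c - of_nat n + 2 :: 'a::comm_ring_1) n"
proof (induction n)
  case (Suc n)
  have "[-1..int (Suc n) - 2] = [-1..int n - 2] @ [int n - 1]"
    using upto_rec2[of "-1" "int n - 1"] by simp
  then have "prod_list (map (\<lambda>j. c - of_int j) [-1..int (Suc n) - 2])
      = pochhammer (c - of_nat n + 2) n * (c - of_int (int n - 1))"
    using Suc by simp
  also have "\<dots> = pochhammer (c - of_nat (Suc n) + 2) (Suc n)"
    by (simp add: pochhammer_rec algebra_simps)
  finally show ?case .
qed simp

lemma cls_ppoly: "cls (ppoly n) = to_U (p_Sh n)"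
  unfolding ppoly_def p_Sh_def
  by (simp add: cls_prod_list cls_simps cls_of_nat cls_of_int prod_list_map_upt prod_list_map_upto_eq_pochhammer
      to_U_simps to_U_prod_list H1_def H2_def flip: prod_list_map_upt prod_list_map_upto_eq_pochhammer)

lemma Rmod_ad_power: "X \<in> sl3 \<Longrightarrow> a \<in> Rmod v \<Longrightarrow> (ad (iota X) ^^ m) a \<in> Rmod v"
  by (induction m) (auto intro: Rmod.adj)

lemma iota_F12: "iota (matrix_unit 2 1) = f12" and iota_F23: "iota (matrix_unit 3 2) = f23"
  by (simp_all add: sl3_matrix_simps)

lemma F12_F23_in_sl3: "matrix_unit 2 1 \<in> sl3" "matrix_unit 3 2 \<in> sl3"
  by (simp_all add: sl3_matrix_simps)

lemma zero_weight_iff: "zero_weight r \<longleftrightarrow> has_weight 0 0 (cls r)"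
  by (auto simp: zero_weight_def has_weight_def commutator_def cls_eq_iff[symmetric] cls_ad cls_0
      H1_def H2_def)

lemma in_Un_plus_iff: "in_Un_plus x \<longleftrightarrow> cls x \<in> Un_plus"
proof
  assume "in_Un_plus x"
  then obtain a b c where "Ueq x (a * e12 + b * e23 + c * e13)"
    unfolding in_Un_plus_def by blast
  then show "cls x \<in> Un_plus"
    unfolding Un_plus_def by (auto simp: cls_eq_iff[symmetric] cls_simps E12_def E23_def E13_def)
next
  assume "cls x \<in> Un_plus"
  then obtain a b c where "cls x = a * E12 + b * E23 + c * E13"
    unfolding Un_plus_def by blast
  moreover obtain a' b' c' where "a = cls a'" "b = cls b'" "c = cls c'"
    using cls_surj by metis
  ultimately have "cls x = cls (a' * e12 + b' * e23 + c' * e13)"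
    by (simp add: cls_simps E12_def E23_def E13_def)
  then show "in_Un_plus x"
    unfolding in_Un_plus_def cls_eq_iff by blast
qed

lemma scaled_R_U_eqmod_ppoly:
  "C ((-1) ^ n / of_nat (fact n * fact (2*n))) * R_U n \<simeq> cls (ppoly n)"
proof -
  define N :: nat where "N = fact n * fact (2*n)"
  define k :: complex where "k = (-1) ^ n / of_nat N"
  have "N \<noteq> 0"
    by (simp add: N_def)
  have "C k * R_U n \<simeq> C k * ((-1) ^ n * to_U (proj_sum n))"
    by (rule Un.eqmod_mult_left[OF R_U_eqmod])
  also have "\<dots> = to_U (const_Sh k * (-1) ^ n * proj_sum n)"
    by (simp add: to_U_simps mult.assoc)
  also have "const_Sh k * (-1) ^ n * proj_sum n = (const_Sh k * of_nat N) * ((-1) ^ n * p_Sh n)"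
    by (simp add: proj_sum_eq N_def mult_ac)
  also have "const_Sh k * of_nat N = (-1) ^ n"
    using \<open>N \<noteq> 0\<close> unfolding k_def by (simp add: const_Sh_divide_of_nat const_Sh_power_minus_one)
  finally show ?thesis
    by (simp add: k_def N_def cls_ppoly mult.assoc[symmetric] flip: power_mult_distrib)
qed

theorem lemma6p3:
  fixes n :: nat
  shows "\<exists>r \<in> Rmod (vprime n). zero_weight r \<and> in_Un_plus (r - ppoly n)"
proof -
  define k :: complex where "k = (-1) ^ n / of_nat (fact n * fact (2*n))"
  define r where "r = sc k * (ad f12 ^^ n) ((ad f23 ^^ (2*n)) (vprime n))"
  have cls_r: "cls r = C k * R_U n"
    by (simp add: r_def cls_mult cls_ad_power cls_vprime C_def R_U_def W_U_def F12_def F23_def)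
  have "r \<in> Rmod (vprime n)"
    unfolding r_def
    using Rmod_ad_power[OF F12_F23_in_sl3(1) Rmod_ad_power[OF F12_F23_in_sl3(2) Rmod.gen]]
    by (intro Rmod.smult) (simp add: iota_F12 iota_F23)
  moreover have "zero_weight r"
    unfolding zero_weight_iff cls_r using has_weight_mult[OF has_weight_C has_weight_R_U] by simp
  moreover have "in_Un_plus (r - ppoly n)"
    using scaled_R_U_eqmod_ppoly[of n]
    by (simp add: in_Un_plus_iff cls_diff cls_r k_def Un.eqmod_def)
  ultimately show ?thesis by blast
qed

end
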